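(* Let $n\geq 4$. Then the wheel $\mathcal{W}_n$ is an $\mathcal{N}$ position for Grim if and only if the path $\mathcal{P}_{n-2}$ is an $\mathcal{N}$ position for Grim.
   Context: Grim is a two-player game on a finite simple undirected graph. Any isolated vertices of the starting graph are deleted before play begins. Players alternate moves; a move consists of selecting a vertex of the current graph and deleting it together with all its incident edges, after which every vertex that has become isolated is also deleted. The player who makes the last legal move wins (a player facing the empty graph has no move and loses). A graph is an $\mathcal{N}$ position if the player about to move has a winning strategy, and a $\mathcal{P}$ position otherwise. $\mathcal{P}_m$ is the path on $m$ vertices, and the wheel $\mathcal{W}_n=\mathcal{C}_{n-1}+K_1$ is the cycle on $n-1$ vertices joined to a single extra vertex (the center) adjacent to every cycle vertex. *)

theory Defs
  imports Main
begin

type_synonym 'a graph = "'a set \<times> 'a set set"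

definition simple_graph :: "'a graph \<Rightarrow> bool" where
  "simple_graph G \<longleftrightarrow> finite (fst G) \<and>
     (\<forall>e\<in>snd G. e \<subseteq> fst G \<and> card e = 2)"

definition remove_isolated :: "'a graph \<Rightarrow> 'a graph" where
  "remove_isolated G = ({v\<in>fst G. \<exists>e\<in>snd G. v \<in> e}, snd G)"

definition grim_move :: "'a graph \<Rightarrow> 'a \<Rightarrow> 'a graph" where
  "grim_move G v = remove_isolated (fst G - {v}, {e\<in>snd G. v \<notin> e})"

lemma card_grim_move_less:
  assumes "finite (fst G)" "v \<in> fst G"
  shows "card (fst (grim_move G v)) < card (fst G)"
proof -
  have "fst (grim_move G v) \<subseteq> fst G - {v}"
    by (auto simp: grim_move_def remove_isolated_def)
  then have "fst (grim_move G v) \<subset> fst G" using assms(2) by blast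
  then show ?thesis using assms(1) by (simp add: psubset_card_mono)
qed

text \<open>grim_N G: the player to move on the (already isolated-vertex-free)
  position G has a winning strategy (normal play: last move wins).\<close>
function grim_N :: "'a graph \<Rightarrow> bool" where
  "grim_N G = (if finite (fst G) then (\<exists>v\<in>fst G. \<not> grim_N (grim_move G v)) else False)"
  by auto
termination
  by (relation "measure (\<lambda>G. card (fst G))")
     (auto simp: card_grim_move_less)

definition N_position :: "'a graph \<Rightarrow> bool" where
  "N_position G \<longleftrightarrow> grim_N (remove_isolated G)"

definition path_graph :: "nat \<Rightarrow> nat graph" where
  "path_graph m = ({0..<m}, {{i, Suc i} | i. Suc i < m})"

text \<open>Wheel W_n = C_{n-1} + K_1: cycle on vertices 0..n-2, center n-1.\<close>
definition wheel_graph :: "nat \<Rightarrow> nat graph" where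
  "wheel_graph n = ({0..<n},
     {{i, (Suc i) mod (n - 1)} | i. i < n - 1} \<union> {{i, n - 1} | i. i < n - 1})"

end

theory Submission
  imports Defs
begin

text \<open>Deleting the center of the wheel \<open>W\<^sub>n\<close> leaves a cycle on \<open>n - 1\<close> vertices, and deleting
  the center and a rim vertex, in either order, leaves a rotated copy of \<open>P\<^sub>n\<^sub>-\<^sub>2\<close>. If
  \<open>P\<^sub>n\<^sub>-\<^sub>2\<close> is an N position, the cycle is a P position, so deleting the center wins.
  Otherwise every first move loses: the opponent answers the center move with any rim vertex and a
  rim move with the center, both times leaving \<open>P\<^sub>n\<^sub>-\<^sub>2\<close>.\<close>

declare grim_N.simps [simp del]

lemma grim_N_iff: "finite (fst G) \<Longrightarrow> grim_N G \<longleftrightarrow> (\<exists>v\<in>fst G. \<not> grim_N (grim_move G v))"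
  by (subst grim_N.simps) simp

lemma not_grim_N_infinite: "infinite (fst G) \<Longrightarrow> \<not> grim_N G"
  by (subst grim_N.simps) simp

lemma fst_grim_move_subset: "fst (grim_move G v) \<subseteq> fst G - {v}"
  by (auto simp: grim_move_def remove_isolated_def)

lemma remove_isolated_eq_Union: "\<Union>E \<subseteq> V \<Longrightarrow> remove_isolated (V, E) = (\<Union>E, E)"
  by (auto simp: remove_isolated_def)

lemma grim_move_grim_move:
  "grim_move (grim_move G u) v = remove_isolated (fst G - {u, v}, {e \<in> snd G. u \<notin> e \<and> v \<notin> e})"
  by (auto simp: grim_move_def remove_isolated_def)

lemma grim_move_commute: "grim_move (grim_move G u) v = grim_move (grim_move G v) u"
  unfolding grim_move_grim_move by (simp add: insert_commute conj_commute)

lemma grim_move_edges_subset: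
  "\<forall>e\<in>snd G. e \<subseteq> fst G \<Longrightarrow> \<forall>e\<in>snd (grim_move G v). e \<subseteq> fst (grim_move G v)"
  unfolding grim_move_def remove_isolated_def by auto

definition map_graph :: "('a \<Rightarrow> 'b) \<Rightarrow> 'a graph \<Rightarrow> 'b graph" where
  "map_graph f G = (f ` fst G, (`) f ` snd G)"

lemma grim_move_map_graph:
  assumes inj: "inj_on f (fst G)" and edges: "\<forall>e\<in>snd G. e \<subseteq> fst G" and v: "v \<in> fst G"
  shows "grim_move (map_graph f G) (f v) = map_graph f (grim_move G v)"
proof -
  have "f x = f v \<longleftrightarrow> x = v" if "x \<in> fst G" for x
    using inj v that unfolding inj_on_def by blast
  moreover from this have "f v \<in> f ` e \<longleftrightarrow> v \<in> e" if "e \<in> snd G" for e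
    using edges that by (metis image_iff subset_iff)
  ultimately show ?thesis
    unfolding grim_move_def remove_isolated_def map_graph_def using edges by (auto; blast)
qed

lemma grim_N_map_graph:
  "inj_on f (fst G) \<Longrightarrow> \<forall>e\<in>snd G. e \<subseteq> fst G \<Longrightarrow> grim_N (map_graph f G) \<longleftrightarrow> grim_N G"
proof (induction G rule: grim_N.induct)
  case (1 G)
  show ?case
  proof (cases "finite (fst G)")
    case False
    with "1.prems"(1) have "infinite (fst (map_graph f G))"
      by (simp add: map_graph_def finite_image_iff)
    with False show ?thesis by (simp add: not_grim_N_infinite)
  next
    case True
    have "grim_N (grim_move (map_graph f G) (f v)) \<longleftrightarrow> grim_N (grim_move G v)" if v: "v \<in> fst G" for v
    proof -
      have "inj_on f (fst (grim_move G v))"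
        by (rule inj_on_subset[OF "1.prems"(1)]) (use fst_grim_move_subset[of G v] in blast)
      moreover have "\<forall>e\<in>snd (grim_move G v). e \<subseteq> fst (grim_move G v)"
        using "1.prems"(2) by (rule grim_move_edges_subset)
      ultimately show ?thesis
        using grim_move_map_graph[OF "1.prems" v] "1.IH"[OF True v] by simp
    qed
    moreover have "finite (fst (map_graph f G))" using True by (simp add: map_graph_def)
    ultimately show ?thesis
      using grim_N_iff[OF True] grim_N_iff[of "map_graph f G"] by (simp add: map_graph_def)
  qed
qed

lemma grim_N_via_center:
  assumes fin: "finite (fst G)" and c: "c \<in> fst G"
    and nonempty: "fst (grim_move G c) \<noteq> {}"
    and c_not_isolated: "\<forall>v\<in>fst G - {c}. c \<in> fst (grim_move G v)"
    and c_and_rim_deleted: "\<forall>v\<in>fst G - {c}. grim_N (grim_move (grim_move G c) v) \<longleftrightarrow> p"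
  shows "grim_N G \<longleftrightarrow> p"
proof -
  have fin_move: "finite (fst (grim_move G v))" for v
    by (rule finite_subset[OF fst_grim_move_subset]) (simp add: fin)
  have "grim_N (grim_move (grim_move G c) v) \<longleftrightarrow> p" if "v \<in> fst (grim_move G c)" for v
    using that fst_grim_move_subset[of G c] c_and_rim_deleted by blast
  with nonempty have rest: "grim_N (grim_move G c) \<longleftrightarrow> \<not> p"
    unfolding grim_N_iff[OF fin_move] by blast
  have "grim_N (grim_move G v)" if "v \<in> fst G" "\<not> p" for v
  proof (cases "v = c")
    case True
    with rest \<open>\<not> p\<close> show ?thesis by simp
  next
    case False
    with that c_and_rim_deleted have "\<not> grim_N (grim_move (grim_move G v) c)"
      by (simp add: grim_move_commute[of G v c])
    with False that c_not_isolated show ?thesis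
      unfolding grim_N_iff[OF fin_move] by blast
  qed
  then show ?thesis
    using rest c unfolding grim_N_iff[OF fin] by blast
qed

lemma inj_on_rotate: "inj_on (\<lambda>j. (j + k) mod m) {0..<m::nat}"
proof (rule inj_onI)
  fix a b assume ab: "a \<in> {0..<m}" "b \<in> {0..<m}" and "(a + k) mod m = (b + k) mod m"
  then have "a mod m = b mod m" by (simp only: nat_mod_eq_iff) simp
  with ab show "a = b" by simp
qed

lemma cycle_edges_avoiding:
  fixes m v :: nat
  assumes v: "v < m"
  defines "g \<equiv> \<lambda>j. (j + Suc v) mod m"
  shows "{e \<in> {{i, Suc i mod m} | i. i < m}. v \<notin> e} = (`) g ` {{j, Suc j} | j. Suc j < m - 1}"
proof -
  have g_Suc: "g (Suc j) = Suc (g j) mod m" for j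
    by (simp add: g_def mod_Suc_eq)
  have g_last: "g (m - 1) = v"
    using v by (simp add: g_def)
  have inj: "inj_on g {0..<m}"
    unfolding g_def by (rule inj_on_rotate)
  have "g ` {0..<m} = {0..<m}"
    using v by (intro endo_inj_surj inj) (auto simp: g_def)
  then have onto: "\<exists>j<m. g j = i" if "i < m" for i
    using that by (metis atLeastLessThan_iff imageE zero_le)
  have avoid: "g j \<noteq> v" if "j < m - 1" for j
  proof
    assume "g j = v"
    then have "g j = g (m - 1)" by (simp only: g_last)
    moreover have "j \<in> {0..<m}" "m - 1 \<in> {0..<m}" using that v by auto
    ultimately have "j = m - 1" by (rule inj_onD[OF inj])
    with that show False by simp
  qed
  show ?thesis
  proof (intro equalityI subsetI)
    fix e assume "e \<in> (`) g ` {{j, Suc j} | j. Suc j < m - 1}"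
    then obtain j where j: "Suc j < m - 1" and e: "e = {g j, Suc (g j) mod m}"
      by (auto simp: g_Suc)
    have "g j < m" using v by (simp add: g_def)
    moreover have "v \<notin> e"
      using avoid[of j] avoid[of "Suc j"] j e g_Suc by auto
    ultimately show "e \<in> {e \<in> {{i, Suc i mod m} | i. i < m}. v \<notin> e}"
      using e by blast
  next
    fix e assume "e \<in> {e \<in> {{i, Suc i mod m} | i. i < m}. v \<notin> e}"
    then obtain i where i: "i < m" and e: "e = {i, Suc i mod m}" and "v \<notin> e" by blast
    then obtain j where j: "j < m" "g j = i" using onto by blast
    with \<open>v \<notin> e\<close> e g_Suc have "g j \<noteq> v" "g (Suc j) \<noteq> v"
      by auto
    then have "j \<noteq> m - 1" "Suc j \<noteq> m - 1"
      using g_last by auto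
    with j have "Suc j < m - 1" by linarith
    moreover have "e = g ` {j, Suc j}" using e j g_Suc by simp
    ultimately show "e \<in> (`) g ` {{j, Suc j} | j. Suc j < m - 1}" by blast
  qed
qed

lemma wheel_graph_Suc:
  "wheel_graph (Suc m) = ({0..<Suc m}, {{i, Suc i mod m} | i. i < m} \<union> {{i, m} | i. i < m})"
  by (simp add: wheel_graph_def)

lemma remove_isolated_wheel_graph:
  assumes "0 < m"
  shows "remove_isolated (wheel_graph (Suc m)) = wheel_graph (Suc m)"
proof -
  have spoke: "{if x = m then 0 else x, m} \<in> snd (wheel_graph (Suc m))" if "x < Suc m" for x
    using that assms by (auto simp: wheel_graph_Suc)
  have "\<exists>e\<in>snd (wheel_graph (Suc m)). x \<in> e" if "x \<in> fst (wheel_graph (Suc m))" for x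
  proof
    show "x \<in> {if x = m then 0 else x, m}" by simp
    show "{if x = m then 0 else x, m} \<in> snd (wheel_graph (Suc m))"
      using that by (intro spoke) (simp add: wheel_graph_Suc)
  qed
  then have "{x \<in> fst (wheel_graph (Suc m)). \<exists>e\<in>snd (wheel_graph (Suc m)). x \<in> e}
      = fst (wheel_graph (Suc m))"
    by blast
  then show ?thesis
    by (simp add: remove_isolated_def)
qed

lemma remove_isolated_path_graph:
  "remove_isolated (path_graph k) = (\<Union>(snd (path_graph k)), snd (path_graph k))"
  unfolding path_graph_def snd_conv by (rule remove_isolated_eq_Union) auto

lemma grim_move_wheel_graph_center_rim:
  assumes "0 < m" "v < m"
  shows "grim_move (grim_move (wheel_graph (Suc m)) m) v
           = map_graph (\<lambda>j. (j + Suc v) mod m) (remove_isolated (path_graph (m - 1)))"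
proof -
  define PE where "PE = {{j, Suc j} | j::nat. Suc j < m - 1}"
  define E where "E = {e \<in> {{i, Suc i mod m} | i. i < m}. v \<notin> e}"
  have path: "remove_isolated (path_graph (m - 1)) = (\<Union>PE, PE)"
    unfolding remove_isolated_path_graph by (simp add: path_graph_def PE_def)
  have rim_below: "Suc i mod m < m" for i
    using \<open>0 < m\<close> by simp
  then have "m \<notin> {i, Suc i mod m}" if "i < m" for i
    using that by (metis insert_iff less_irrefl singletonD)
  then have rim_edges: "{e \<in> snd (wheel_graph (Suc m)). m \<notin> e \<and> v \<notin> e} = E"
    by (auto simp: wheel_graph_Suc E_def)
  have "\<Union>E \<subseteq> {0..<Suc m} - {m, v}"
  proof
    fix x assume "x \<in> \<Union>E"
    then obtain i where "i < m" "x \<in> {i, Suc i mod m}" "v \<notin> {i, Suc i mod m}"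
      by (auto simp: E_def)
    with rim_below[of i] show "x \<in> {0..<Suc m} - {m, v}"
      by (auto simp del: mod_less_divisor)
  qed
  then have "grim_move (grim_move (wheel_graph (Suc m)) m) v = (\<Union>E, E)"
    unfolding grim_move_grim_move rim_edges by (simp add: remove_isolated_eq_Union wheel_graph_Suc)
  also have "E = (`) (\<lambda>j. (j + Suc v) mod m) ` PE"
    unfolding E_def PE_def using \<open>v < m\<close> by (rule cycle_edges_avoiding)
  also have "(\<Union>((`) (\<lambda>j. (j + Suc v) mod m) ` PE), (`) (\<lambda>j. (j + Suc v) mod m) ` PE)
      = map_graph (\<lambda>j. (j + Suc v) mod m) (remove_isolated (path_graph (m - 1)))"
    unfolding path by (simp add: map_graph_def image_Union)
  finally show ?thesis .
qed

lemma grim_N_wheel_graph_center_rim: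
  assumes "0 < m" "v < m"
  shows "grim_N (grim_move (grim_move (wheel_graph (Suc m)) m) v) \<longleftrightarrow> N_position (path_graph (m - 1))"
  unfolding grim_move_wheel_graph_center_rim[OF assms] N_position_def
proof (rule grim_N_map_graph)
  have "fst (remove_isolated (path_graph (m - 1))) \<subseteq> {0..<m}"
    unfolding remove_isolated_path_graph by (auto simp: path_graph_def)
  then show "inj_on (\<lambda>j. (j + Suc v) mod m) (fst (remove_isolated (path_graph (m - 1))))"
    by (rule inj_on_subset[OF inj_on_rotate])
  show "\<forall>e\<in>snd (remove_isolated (path_graph (m - 1))). e \<subseteq> fst (remove_isolated (path_graph (m - 1)))"
    by (auto simp: remove_isolated_path_graph)
qed

lemma zero_in_grim_move_wheel_graph_center:
  assumes "0 < m"
  shows "0 \<in> fst (grim_move (wheel_graph (Suc m)) m)"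
proof -
  have "{0, Suc 0 mod m} \<in> snd (wheel_graph (Suc m))"
    using assms by (auto simp: wheel_graph_Suc)
  moreover have "m \<notin> {0, Suc 0 mod m}"
    using assms by (metis insert_iff less_irrefl mod_less_divisor singletonD)
  ultimately show ?thesis
    using assms by (auto simp: grim_move_def remove_isolated_def wheel_graph_Suc)
qed

lemma center_in_grim_move_wheel_graph_rim:
  assumes "2 \<le> m" "v < m"
  shows "m \<in> fst (grim_move (wheel_graph (Suc m)) v)"
proof -
  define u where "u = (if v = 0 then 1 else 0 :: nat)"
  have "u < m" "u \<noteq> v"
    using assms by (auto simp: u_def)
  then have "{u, m} \<in> snd (wheel_graph (Suc m))" "v \<notin> {u, m}"
    using assms by (auto simp: wheel_graph_Suc)
  then show ?thesis
    using assms by (auto simp: grim_move_def remove_isolated_def wheel_graph_Suc)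
qed

lemma grim_N_wheel_graph:
  assumes "2 \<le> m"
  shows "grim_N (wheel_graph (Suc m)) \<longleftrightarrow> N_position (path_graph (m - 1))"
proof (rule grim_N_via_center)
  show "finite (fst (wheel_graph (Suc m)))" "m \<in> fst (wheel_graph (Suc m))"
    by (simp_all add: wheel_graph_Suc)
  show "fst (grim_move (wheel_graph (Suc m)) m) \<noteq> {}"
    using zero_in_grim_move_wheel_graph_center[of m] assms by auto
  have rim: "v < m" if "v \<in> fst (wheel_graph (Suc m)) - {m}" for v
    using that by (auto simp: wheel_graph_Suc)
  show "\<forall>v\<in>fst (wheel_graph (Suc m)) - {m}. m \<in> fst (grim_move (wheel_graph (Suc m)) v)"
    using center_in_grim_move_wheel_graph_rim[OF assms] rim by blast
  show "\<forall>v\<in>fst (wheel_graph (Suc m)) - {m}.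
      grim_N (grim_move (grim_move (wheel_graph (Suc m)) m) v) \<longleftrightarrow> N_position (path_graph (m - 1))"
    using grim_N_wheel_graph_center_rim assms rim by simp
qed

theorem corollary5p7:
  fixes n :: nat
  assumes "n \<ge> 4"
  shows "N_position (wheel_graph n) \<longleftrightarrow> N_position (path_graph (n - 2))"
proof -
  obtain m where n: "n = Suc m"
    using assms by (cases n) auto
  with assms have m: "2 \<le> m" by simp
  then have "N_position (wheel_graph n) \<longleftrightarrow> grim_N (wheel_graph (Suc m))"
    by (simp add: N_position_def n remove_isolated_wheel_graph)
  also have "\<dots> \<longleftrightarrow> N_position (path_graph (m - 1))"
    using m by (rule grim_N_wheel_graph)
  finally show ?thesis
    using n by simp
qed

end
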